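(* For every positive integer $n$, the Chinese monoid $\mathsf{Ch}_n$ satisfies every semigroup identity that is satisfied by the monoid $\mathcal U_2(\mathbb T)$ of $2\times 2$ upper triangular tropical matrices.
   Context: The Chinese monoid of rank $n$ is the monoid $\mathsf{Ch}_n=\langle a_1,\dots,a_n\rangle$ presented by the relations $a_ja_ka_i=a_ka_ja_i=a_ka_ia_j$ for all $1\le i\le j\le k\le n$. The tropical semiring is $\mathbb T=\mathbb R\cup\{-\infty\}$ with addition $\max$ and multiplication $+$; $\mathcal U_2(\mathbb T)$ is the monoid of $2\times2$ matrices over $\mathbb T$ with lower-left entry $-\infty$, under the max-plus matrix product. A semigroup identity is a pair $u=v$ of nonempty words over an alphabet $\mathcal A$; a semigroup $\mathcal S$ satisfies it if $\phi(u)=\phi(v)$ for every semigroup homomorphism $\phi:\mathcal A^+\to\mathcal S$. *)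

theory Defs
  imports Main "HOL.Real"
begin

datatype trop = NegInf | Fin real

fun tadd :: "trop \<Rightarrow> trop \<Rightarrow> trop" where
  "tadd NegInf y = y"
| "tadd x NegInf = x"
| "tadd (Fin a) (Fin b) = Fin (max a b)"

fun tmul :: "trop \<Rightarrow> trop \<Rightarrow> trop" where
  "tmul NegInf y = NegInf"
| "tmul x NegInf = NegInf"
| "tmul (Fin a) (Fin b) = Fin (a + b)"

text \<open>TM a11 a12 a21 a22 is the matrix with rows (a11 a12), (a21 a22).\<close>
datatype tmat2 = TM trop trop trop trop

fun tmat_mult :: "tmat2 \<Rightarrow> tmat2 \<Rightarrow> tmat2" where
  "tmat_mult (TM a11 a12 a21 a22) (TM b11 b12 b21 b22) =
     TM (tadd (tmul a11 b11) (tmul a12 b21)) (tadd (tmul a11 b12) (tmul a12 b22))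
        (tadd (tmul a21 b11) (tmul a22 b21)) (tadd (tmul a21 b12) (tmul a22 b22))"

definition U2T :: "tmat2 set" where
  "U2T = {TM a b NegInf d | a b d. True}"

text \<open>Image of a nonempty word under the semigroup homomorphism A^+ \<rightarrow> U_2(T)
  determined by the letter images phi.\<close>
fun eval_tmat :: "('a \<Rightarrow> tmat2) \<Rightarrow> 'a list \<Rightarrow> tmat2" where
  "eval_tmat phi [x] = phi x"
| "eval_tmat phi (x # y # ys) = tmat_mult (phi x) (eval_tmat phi (y # ys))"
| "eval_tmat phi [] = undefined"

definition U2T_satisfies :: "'a list \<Rightarrow> 'a list \<Rightarrow> bool" where
  "U2T_satisfies u v \<longleftrightarrow>
     (\<forall>phi. (\<forall>x. phi x \<in> U2T) \<longrightarrow> eval_tmat phi u = eval_tmat phi v)"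

text \<open>Words over generators a_1..a_n are nat lists with letters in {1..n};
  the Chinese congruence is the least congruence on such words containing
  a_j a_k a_i = a_k a_j a_i = a_k a_i a_j for 1 \<le> i \<le> j \<le> k \<le> n.\<close>
inductive chinese_cong :: "nat \<Rightarrow> nat list \<Rightarrow> nat list \<Rightarrow> bool" for n where
  rel1: "\<lbrakk>1 \<le> i; i \<le> j; j \<le> k; k \<le> n\<rbrakk> \<Longrightarrow>
         chinese_cong n (p @ [j, k, i] @ q) (p @ [k, j, i] @ q)"
| rel2: "\<lbrakk>1 \<le> i; i \<le> j; j \<le> k; k \<le> n\<rbrakk> \<Longrightarrow>
         chinese_cong n (p @ [k, j, i] @ q) (p @ [k, i, j] @ q)"
| refl: "chinese_cong n w w"
| sym: "chinese_cong n w w' \<Longrightarrow> chinese_cong n w' w"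
| trans: "chinese_cong n w w' \<Longrightarrow> chinese_cong n w' w'' \<Longrightarrow> chinese_cong n w w''"

text \<open>Ch_n satisfies u = v: for every semigroup homomorphism A^+ \<rightarrow> Ch_n,
  given by letter images \<sigma> x (representative words over {1..n}, possibly empty,
  i.e. possibly the identity), the images of u and v coincide in Ch_n.\<close>
definition chinese_satisfies :: "nat \<Rightarrow> 'a list \<Rightarrow> 'a list \<Rightarrow> bool" where
  "chinese_satisfies n u v \<longleftrightarrow>
     (\<forall>\<sigma> :: 'a \<Rightarrow> nat list. (\<forall>x. set (\<sigma> x) \<subseteq> {1..n}) \<longrightarrow>
        chinese_cong n (concat (map \<sigma> u)) (concat (map \<sigma> v)))"

end

theory Submission
  imports Defs
begin

text \<open>
  For \<open>p < q\<close> give a letter \<open>x\<close> the weight \<open>1\<close> if \<open>x \<le> p\<close>, \<open>-1\<close> if \<open>q \<le> x\<close> and \<open>0\<close>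
  otherwise, and let the peak of a word be the largest weight of one of its prefixes (the
  empty prefix included). The peak is invariant under the Chinese relations, and
  \<open>w \<mapsto> [[weight w, peak w], [-\<infinity>, 0]]\<close> is a homomorphism into \<open>U\<^sub>2(T)\<close>; so if \<open>U\<^sub>2(T)\<close>
  satisfies \<open>u = v\<close>, both sides of every substitution into \<open>Ch\<^sub>n\<close> have the same peaks.

  It remains to see that the peaks with \<open>p < q \<le> n + 1\<close> separate the elements of \<open>Ch\<^sub>n\<close>.
  Every word over \<open>{1..n}\<close> is congruent to \<open>u (n 1)^(c 1) \<dots> (n (n-1))^(c (n-1)) n^k\<close> with
  \<open>u\<close> over \<open>{1..n-1}\<close>. The tail has peak \<open>0\<close> whenever \<open>q \<le> n\<close>, so these peaks only see
  \<open>u\<close>, which is then determined up to congruence by induction on \<open>n\<close>; the peaks with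
  \<open>q = n + 1\<close> count the letters \<open>\<le> p\<close>, and these counts determine the exponents \<open>c j\<close> and \<open>k\<close>.
\<close>

declare chinese_cong.trans [trans]

lemma chinese_cong_append:
  assumes "chinese_cong n w w'"
  shows "chinese_cong n (x @ w @ y) (x @ w' @ y)"
  using assms
proof (induction rule: chinese_cong.induct)
  case (rel1 i j k p q)
  then show ?case using chinese_cong.rel1[of i j k n "x @ p" "q @ y"] by simp
next
  case (rel2 i j k p q)
  then show ?case using chinese_cong.rel2[of i j k n "x @ p" "q @ y"] by simp
qed (metis chinese_cong.refl chinese_cong.sym chinese_cong.trans)+

lemma chinese_cong_append_left: "chinese_cong n w w' \<Longrightarrow> chinese_cong n (x @ w) (x @ w')"
  using chinese_cong_append[of n w w' x "[]"] by simp

lemma chinese_cong_append_right: "chinese_cong n w w' \<Longrightarrow> chinese_cong n (w @ y) (w' @ y)"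
  using chinese_cong_append[of n w w' "[]" y] by simp

lemma chinese_cong_mono:
  assumes "chinese_cong m w w'" and "m \<le> n"
  shows "chinese_cong n w w'"
  using assms
proof (induction rule: chinese_cong.induct)
  case (rel1 i j k p q)
  then show ?case by (intro chinese_cong.rel1) auto
next
  case (rel2 i j k p q)
  then show ?case by (intro chinese_cong.rel2) auto
qed (metis chinese_cong.refl chinese_cong.sym chinese_cong.trans)+

lemma chinese_cong_swap_first:
  "\<lbrakk>1 \<le> i; i \<le> j; j \<le> k; k \<le> n\<rbrakk> \<Longrightarrow> chinese_cong n [j, k, i] [k, j, i]"
  using chinese_cong.rel1[of i j k n "[]" "[]"] by simp

lemma chinese_cong_swap_last:
  "\<lbrakk>1 \<le> i; i \<le> j; j \<le> k; k \<le> n\<rbrakk> \<Longrightarrow> chinese_cong n [k, j, i] [k, i, j]"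
  using chinese_cong.rel2[of i j k n "[]" "[]"] by simp

lemma chinese_cong_commute_concat:
  assumes "\<And>x. x \<in> set xs \<Longrightarrow> chinese_cong n (x @ y) (y @ x)"
  shows "chinese_cong n (concat xs @ y) (y @ concat xs)"
  using assms
proof (induction xs)
  case Nil
  show ?case by (simp add: chinese_cong.refl)
next
  case (Cons x xs)
  have "chinese_cong n (x @ concat xs @ y) (x @ y @ concat xs)"
    using Cons by (intro chinese_cong_append_left) simp
  also have "chinese_cong n (x @ y @ concat xs) (y @ x @ concat xs)"
    using Cons chinese_cong_append_right[of n "x @ y" "y @ x" "concat xs"] by simp
  finally show ?case by simp
qed

lemma letter_commutes_top_pair:
  assumes "1 \<le> j" and "j \<le> t" and "t \<le> n"
  shows "chinese_cong n ([n, j] @ [t]) ([t] @ [n, j])"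
proof -
  have "chinese_cong n [n, j, t] [n, t, j]"
    using assms by (auto intro!: chinese_cong.sym[OF chinese_cong_swap_last])
  also have "chinese_cong n [n, t, j] [t, n, j]"
    using assms by (auto intro!: chinese_cong.sym[OF chinese_cong_swap_first])
  finally show ?thesis by simp
qed

lemma top_pairs_commute:
  assumes "1 \<le> a" and "a \<le> b" and "b \<le> n"
  shows "chinese_cong n ([n, b] @ [n, a]) ([n, a] @ [n, b])"
proof -
  have "chinese_cong n [n, b, n, a] [n, n, a, b]"
    using chinese_cong_append_left[OF chinese_cong.sym[OF letter_commutes_top_pair[of a b n]], of "[n]"]
      assms by simp
  also have "chinese_cong n [n, n, a, b] [n, a, n, b]"
    using chinese_cong_append_right[OF chinese_cong.sym[OF letter_commutes_top_pair[of a n n]], of "[b]"]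
      assms by simp
  finally show ?thesis by simp
qed

definition top_row :: "nat \<Rightarrow> (nat \<Rightarrow> nat) \<Rightarrow> nat \<Rightarrow> nat list" where
  "top_row n c m = concat (concat (map (\<lambda>j. replicate (c j) [n, j]) [1..<Suc m]))"

lemma top_row_0 [simp]: "top_row n c 0 = []"
  by (simp add: top_row_def)

lemma top_row_Suc [simp]:
  "top_row n c (Suc m) = top_row n c m @ concat (replicate (c (Suc m)) [n, Suc m])"
  by (simp add: top_row_def)

lemma top_row_cong:
  "(\<And>j. 1 \<le> j \<Longrightarrow> j \<le> m \<Longrightarrow> c j = c' j) \<Longrightarrow> top_row n c m = top_row n c' m"
  unfolding top_row_def by (intro arg_cong[where f = concat] map_cong) auto

lemma letter_commutes_top_row:
  assumes "m \<le> t" and "t \<le> n"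
  shows "chinese_cong n (top_row n c m @ [t]) ([t] @ top_row n c m)"
  unfolding top_row_def
  by (rule chinese_cong_commute_concat) (use assms letter_commutes_top_pair in auto)

lemma top_pair_commutes_top_pairs:
  assumes "1 \<le> x" and "x \<le> b" and "b \<le> n"
  shows "chinese_cong n (concat (replicate k [n, b]) @ [n, x]) ([n, x] @ concat (replicate k [n, b]))"
  by (rule chinese_cong_commute_concat) (use assms top_pairs_commute in auto)

lemma top_row_insert_pair:
  assumes "1 \<le> x" and "x \<le> m" and "m < n"
  shows "chinese_cong n (top_row n c m @ [n, x]) (top_row n (c(x := Suc (c x))) m)"
  using assms
proof (induction m)
  case 0
  then show ?case by simp
next
  case (Suc m)
  let ?c' = "c(x := Suc (c x))"
  show ?case
  proof (cases "x = Suc m")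
    case True
    have "top_row n ?c' m = top_row n c m"
      by (rule top_row_cong) (use True in auto)
    moreover have "concat (replicate (c x) [n, x]) @ [n, x] = concat (replicate (Suc (c x)) [n, x])"
      by (simp flip: replicate_append_same)
    ultimately have "top_row n ?c' (Suc m) = top_row n c (Suc m) @ [n, x]"
      using True by (simp only: top_row_Suc fun_upd_same append_assoc)
    then show ?thesis
      by (metis chinese_cong.refl)
  next
    case False
    let ?R = "concat (replicate (c (Suc m)) [n, Suc m])"
    have "top_row n c (Suc m) @ [n, x] = top_row n c m @ ?R @ [n, x]"
      by simp
    also have "chinese_cong n \<dots> (top_row n c m @ [n, x] @ ?R)"
      using Suc.prems by (intro chinese_cong_append_left top_pair_commutes_top_pairs) auto
    also have "\<dots> = (top_row n c m @ [n, x]) @ ?R"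
      by simp
    also have "chinese_cong n \<dots> (top_row n ?c' m @ ?R)"
      by (rule chinese_cong_append_right[OF Suc.IH]) (use Suc.prems False in auto)
    also have "\<dots> = top_row n ?c' (Suc m)"
      using False by simp
    finally show ?thesis .
  qed
qed

text \<open>
  The letter \<open>x\<close> cannot pass the last pair \<open>(n, m+1)\<close>: the second relation turns
  \<open>n (m+1) x\<close> into \<open>n x (m+1)\<close>, the new pair \<open>(n x)\<close> moves left to join its block, and the
  letter \<open>m+1\<close>, which commutes with the whole row, leaves it on the left.
\<close>

lemma top_row_Suc_append_lower_letter:
  assumes "1 \<le> x" and "x \<le> m" and "Suc m < n"
  shows "chinese_cong n (top_row n c m @ concat (replicate (Suc k) [n, Suc m]) @ [x])
    (Suc m # top_row n (c(x := Suc (c x), Suc m := k)) (Suc m))"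
proof -
  let ?R = "concat (replicate k [n, Suc m])"
  let ?c1 = "c(x := Suc (c x))"
  let ?c2 = "?c1(Suc m := k)"
  have "top_row n c m @ concat (replicate (Suc k) [n, Suc m]) @ [x]
      = top_row n c m @ ?R @ [n, Suc m, x]"
    by (simp flip: replicate_append_same)
  also have "chinese_cong n \<dots> (top_row n c m @ ?R @ [n, x, Suc m])"
    using chinese_cong_append_left[OF chinese_cong_swap_last[of x "Suc m" n n],
        of "top_row n c m @ ?R"] assms by simp
  also have "\<dots> = top_row n c m @ (?R @ [n, x]) @ [Suc m]"
    by simp
  also have "chinese_cong n \<dots> (top_row n c m @ ([n, x] @ ?R) @ [Suc m])"
    using assms by (intro chinese_cong_append top_pair_commutes_top_pairs) auto
  also have "\<dots> = (top_row n c m @ [n, x]) @ ?R @ [Suc m]"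
    by simp
  also have "chinese_cong n \<dots> (top_row n ?c1 m @ ?R @ [Suc m])"
    using assms by (intro chinese_cong_append_right top_row_insert_pair) auto
  also have "\<dots> = top_row n ?c2 (Suc m) @ [Suc m]"
    using top_row_cong[of m ?c2 ?c1 n] by simp
  also have "chinese_cong n \<dots> (Suc m # top_row n ?c2 (Suc m))"
    using letter_commutes_top_row[of "Suc m" "Suc m" n ?c2] assms by simp
  finally show ?thesis .
qed

lemma top_row_append_letter:
  assumes "1 \<le> x" and "x < n" and "m < n"
  shows "\<exists>y c'. 1 \<le> y \<and> y < n \<and> chinese_cong n (top_row n c m @ [x]) (y # top_row n c' m)"
  using assms(3)
proof (induction m arbitrary: c)
  case 0
  show ?case
    using assms by (auto intro: chinese_cong.refl)
next
  case (Suc m)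
  let ?R = "concat (replicate (c (Suc m)) [n, Suc m])"
  consider (passes) "c (Suc m) = 0 \<or> Suc m \<le> x" | (stops) k where "c (Suc m) = Suc k" "x \<le> m"
    by (metis not0_implies_Suc not_less_eq_eq)
  then show ?case
  proof cases
    case passes
    have R: "chinese_cong n (?R @ [x]) ([x] @ ?R)"
      by (rule chinese_cong_commute_concat) (use passes assms letter_commutes_top_pair in auto)
    obtain y c' where y: "1 \<le> y" "y < n"
      and cy: "chinese_cong n (top_row n c m @ [x]) (y # top_row n c' m)"
      using Suc.IH Suc.prems by (meson Suc_lessD)
    let ?c'' = "c'(Suc m := c (Suc m))"
    have "top_row n c (Suc m) @ [x] = top_row n c m @ ?R @ [x]"
      by simp
    also have "chinese_cong n \<dots> (top_row n c m @ [x] @ ?R)"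
      by (rule chinese_cong_append_left[OF R])
    also have "\<dots> = (top_row n c m @ [x]) @ ?R"
      by simp
    also have "chinese_cong n \<dots> ((y # top_row n c' m) @ ?R)"
      by (rule chinese_cong_append_right[OF cy])
    also have "\<dots> = y # top_row n ?c'' (Suc m)"
      using top_row_cong[of m ?c'' c' n] by simp
    finally show ?thesis
      using y by blast
  next
    case stops
    then have "chinese_cong n (top_row n c (Suc m) @ [x])
        (Suc m # top_row n (c(x := Suc (c x), Suc m := k)) (Suc m))"
      using top_row_Suc_append_lower_letter[of x m n c k] assms Suc.prems by simp
    moreover have "1 \<le> Suc m" and "Suc m < n"
      using Suc.prems by simp_all
    ultimately show ?thesis
      by blast
  qed
qed

lemma top_row_replicate_append_letter:
  assumes "1 \<le> x" and "x \<le> m" and "m < n"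
  shows "chinese_cong n (top_row n c m @ replicate (Suc k) n @ [x])
    (top_row n (c(x := Suc (c x))) m @ replicate k n)"
proof -
  have "top_row n c m @ replicate (Suc k) n @ [x] = top_row n c m @ replicate k n @ [n, x]"
    by (simp flip: replicate_append_same)
  also have "chinese_cong n \<dots> (top_row n c m @ [n, x] @ replicate k n)"
    using chinese_cong_commute_concat[of "replicate k [n]" n "[n, x]"]
      chinese_cong.sym[OF letter_commutes_top_pair[of x n n]] assms
    by (intro chinese_cong_append_left) auto
  also have "\<dots> = (top_row n c m @ [n, x]) @ replicate k n"
    by simp
  also have "chinese_cong n \<dots> (top_row n (c(x := Suc (c x))) m @ replicate k n)"
    using assms by (intro chinese_cong_append_right top_row_insert_pair)
  finally show ?thesis .
qed

lemma top_normal_form_exists: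
  assumes "set w \<subseteq> {1..Suc n}"
  shows "\<exists>u c k. set u \<subseteq> {1..n} \<and>
    chinese_cong (Suc n) w (u @ top_row (Suc n) c n @ replicate k (Suc n))"
  using assms
proof (induction w rule: rev_induct)
  case Nil
  have "top_row (Suc n) (\<lambda>_. 0) n = []"
    by (simp add: top_row_def)
  then have "chinese_cong (Suc n) [] ([] @ top_row (Suc n) (\<lambda>_. 0) n @ replicate 0 (Suc n))"
    by (simp add: chinese_cong.refl)
  then show ?case
    by (metis empty_set empty_subsetI)
next
  case (snoc x w)
  let ?N = "Suc n"
  obtain u c k where u: "set u \<subseteq> {1..n}"
    and w: "chinese_cong ?N w (u @ top_row ?N c n @ replicate k ?N)"
    using snoc by auto
  have x: "1 \<le> x" "x \<le> ?N"
    using snoc.prems by auto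
  have wx: "chinese_cong ?N (w @ [x]) (u @ top_row ?N c n @ replicate k ?N @ [x])"
    using chinese_cong_append_right[OF w, of "[x]"] by simp
  consider (top) "x = ?N" | (pair) k' where "x < ?N" "k = Suc k'" | (letter) "x < ?N" "k = 0"
    using x by (cases "x = ?N"; cases k) auto
  then show ?case
  proof cases
    case top
    then have "u @ top_row ?N c n @ replicate k ?N @ [x] = u @ top_row ?N c n @ replicate (Suc k) ?N"
      by (simp flip: replicate_append_same)
    then show ?thesis
      using u wx by metis
  next
    case pair
    have "chinese_cong ?N (top_row ?N c n @ replicate (Suc k') ?N @ [x])
        (top_row ?N (c(x := Suc (c x))) n @ replicate k' ?N)"
      using pair x by (intro top_row_replicate_append_letter) auto
    then have "chinese_cong ?N (u @ top_row ?N c n @ replicate k ?N @ [x])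
        (u @ top_row ?N (c(x := Suc (c x))) n @ replicate k' ?N)"
      using chinese_cong_append_left pair by blast
    then show ?thesis
      using u chinese_cong.trans[OF wx] by blast
  next
    case letter
    obtain y c' where y: "1 \<le> y" "y < ?N"
      and cy: "chinese_cong ?N (top_row ?N c n @ [x]) (y # top_row ?N c' n)"
      using top_row_append_letter[of x ?N n c] letter x by auto
    have "chinese_cong ?N (u @ top_row ?N c n @ [x]) ((u @ [y]) @ top_row ?N c' n @ replicate 0 ?N)"
      using chinese_cong_append_left[OF cy, of u] by simp
    then have "chinese_cong ?N (w @ [x]) ((u @ [y]) @ top_row ?N c' n @ replicate 0 ?N)"
      using chinese_cong.trans[OF wx] letter by simp
    moreover have "set (u @ [y]) \<subseteq> {1..n}"
      using u y by auto
    ultimately show ?thesis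
      by blast
  qed
qed

definition letter_weight :: "nat \<Rightarrow> nat \<Rightarrow> nat \<Rightarrow> int" where
  "letter_weight p q x = (if x \<le> p then 1 else if q \<le> x then -1 else 0)"

definition weight :: "nat \<Rightarrow> nat \<Rightarrow> nat list \<Rightarrow> int" where
  "weight p q w = sum_list (map (letter_weight p q) w)"

fun peak :: "nat \<Rightarrow> nat \<Rightarrow> nat list \<Rightarrow> int" where
  "peak p q [] = 0"
| "peak p q (x # w) = max 0 (letter_weight p q x + peak p q w)"

lemma weight_append [simp]: "weight p q (v @ w) = weight p q v + weight p q w"
  by (simp add: weight_def)

lemma peak_nonneg: "0 \<le> peak p q w"
  by (cases w) auto

lemma weight_le_peak: "weight p q w \<le> peak p q w"
  by (induction w) (auto simp: weight_def)

lemma peak_append: "peak p q (v @ w) = max (peak p q v) (weight p q v + peak p q w)"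
  by (induction v) (auto simp: weight_def peak_nonneg max_def)

lemma peak_chinese_rel:
  assumes "i \<le> j" and "j \<le> k"
  shows "peak p q ([j, k, i] @ r) = peak p q ([k, j, i] @ r)"
    and "peak p q ([k, j, i] @ r) = peak p q ([k, i, j] @ r)"
proof -
  obtain a b c where abc: "letter_weight p q i = a" "letter_weight p q k = b" "letter_weight p q j = c"
    by blast
  have "b \<le> c" "c \<le> a" "a \<in> {-1, 0, 1}" "b \<in> {-1, 0, 1}" "c \<in> {-1, 0, 1}"
    using assms by (auto simp: letter_weight_def simp flip: abc)
  then show "peak p q ([j, k, i] @ r) = peak p q ([k, j, i] @ r)"
    and "peak p q ([k, j, i] @ r) = peak p q ([k, i, j] @ r)"
    using peak_nonneg[of p q r] by (auto simp: abc max_def)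
qed

lemma peak_chinese_cong:
  assumes "chinese_cong n w w'"
  shows "peak p q w = peak p q w'"
  using assms
proof (induction rule: chinese_cong.induct)
  case (rel1 i j k v r)
  then have "peak p q ([j, k, i] @ r) = peak p q ([k, j, i] @ r)"
    by (intro peak_chinese_rel(1))
  then show ?case
    by (simp only: peak_append[of p q v])
next
  case (rel2 i j k v r)
  then have "peak p q ([k, j, i] @ r) = peak p q ([k, i, j] @ r)"
    by (intro peak_chinese_rel(2))
  then show ?case
    by (simp only: peak_append[of p q v])
qed simp_all

definition peak_matrix :: "nat \<Rightarrow> nat \<Rightarrow> nat list \<Rightarrow> tmat2" where
  "peak_matrix p q w = TM (Fin (of_int (weight p q w))) (Fin (of_int (peak p q w))) NegInf (Fin 0)"

lemma peak_matrix_in_U2T: "peak_matrix p q w \<in> U2T"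
  by (auto simp: peak_matrix_def U2T_def)

lemma peak_matrix_append:
  "peak_matrix p q (v @ w) = tmat_mult (peak_matrix p q v) (peak_matrix p q w)"
  by (simp add: peak_matrix_def peak_append max.commute)

lemma eval_tmat_peak_matrix:
  "u \<noteq> [] \<Longrightarrow> eval_tmat (\<lambda>x. peak_matrix p q (\<sigma> x)) u = peak_matrix p q (concat (map \<sigma> u))"
  by (induction u rule: induct_list012) (simp_all add: peak_matrix_append)

lemma peak_eq_if_U2T_satisfies:
  assumes "U2T_satisfies u v" and "u \<noteq> []" and "v \<noteq> []"
  shows "peak p q (concat (map \<sigma> u)) = peak p q (concat (map \<sigma> v))"
proof -
  have "peak_matrix p q (concat (map \<sigma> u)) = peak_matrix p q (concat (map \<sigma> v))"
    using assms peak_matrix_in_U2T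
    by (simp add: U2T_satisfies_def flip: eval_tmat_peak_matrix)
  then show ?thesis
    by (simp add: peak_matrix_def)
qed

abbreviation count_le :: "nat \<Rightarrow> nat list \<Rightarrow> nat" where
  "count_le p w \<equiv> length (filter (\<lambda>x. x \<le> p) w)"

lemma peak_eq_count_le:
  "\<forall>x\<in>set w. x < q \<Longrightarrow> peak p q w = int (count_le p w)"
  by (induction w) (auto simp: letter_weight_def)

lemma peak_concat_eq_0:
  "(\<And>b. b \<in> set bs \<Longrightarrow> peak p q b = 0 \<and> weight p q b \<le> 0) \<Longrightarrow> peak p q (concat bs) = 0"
  by (induction bs) (auto simp: peak_append)

lemma peak_top_row_replicate:
  assumes "p < q" and "q \<le> n"
  shows "peak p q (top_row n c m @ replicate k n) = 0"
proof -
  have "top_row n c m @ replicate k n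
      = concat (concat (map (\<lambda>j. replicate (c j) [n, j]) [1..<Suc m]) @ replicate k [n])"
    by (simp add: top_row_def)
  also have "peak p q \<dots> = 0"
    using assms by (intro peak_concat_eq_0) (auto simp: letter_weight_def weight_def)
  finally show ?thesis .
qed

lemma peak_append_top_row_replicate:
  assumes "p < q" and "q \<le> n"
  shows "peak p q (u @ top_row n c m @ replicate k n) = peak p q u"
  using peak_top_row_replicate[OF assms] weight_le_peak[of p q u] by (simp add: peak_append)

lemma set_top_row: "set (top_row n c m) \<subseteq> insert n {1..m}"
  by (auto simp: top_row_def)

lemma count_le_top_row:
  assumes "p < n"
  shows "count_le p (top_row n c m) = (\<Sum>j = 1..min p m. c j)"
proof (induction m)
  case 0
  then show ?case by simp
next
  case (Suc m)
  have "count_le p (concat (replicate r [n, Suc m])) = (if Suc m \<le> p then r else 0)" for r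
    using assms by (induction r) auto
  then show ?case
    using Suc by (cases "Suc m \<le> p") (auto simp: min_def)
qed

lemma top_row_replicate_eq_if_count_le_eq:
  assumes "m < n"
    and "\<And>p. p \<le> n \<Longrightarrow>
      count_le p (top_row n c m @ replicate k n) = count_le p (top_row n c' m @ replicate k' n)"
  shows "top_row n c m @ replicate k n = top_row n c' m @ replicate k' n"
proof -
  have sums: "(\<Sum>i = 1..p. c i) = (\<Sum>i = 1..p. c' i)" if "p \<le> m" for p
    using assms(2)[of p] that assms(1) by (simp add: count_le_top_row min_absorb1)
  have rows: "top_row n c m = top_row n c' m"
  proof (rule top_row_cong)
    fix j assume "1 \<le> j" "j \<le> m"
    then show "c j = c' j"
      using sums[of "j - 1"] sums[of j] by (cases j) simp_all
  qed
  have "k = k'"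
    using assms(2)[of n] rows by simp
  then show ?thesis
    using rows by simp
qed

lemma count_le_eq_if_peaks_eq:
  assumes "\<forall>x\<in>set w. x < q" and "\<forall>x\<in>set w'. x < q"
    and "\<And>p. p < q \<Longrightarrow> peak p q w = peak p q w'"
  shows "count_le p w = count_le p w'"
proof -
  have "count_le p v = count_le (min p (q - 1)) v" if "\<forall>x\<in>set v. x < q" for v
    using that by (auto intro!: arg_cong[where f = length] filter_cong)
  moreover have "count_le (min p (q - 1)) w = count_le (min p (q - 1)) w'"
  proof (cases "q = 0")
    case True
    then show ?thesis
      using assms(1,2) by simp
  next
    case False
    then show ?thesis
      using assms(3)[of "min p (q - 1)"] assms(1,2) by (simp add: peak_eq_count_le)
  qed
  ultimately show ?thesis
    using assms(1,2) by metis
qed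

lemma chinese_cong_if_peaks_eq:
  assumes "set w \<subseteq> {1..n}" and "set w' \<subseteq> {1..n}"
    and "\<And>p q. p < q \<Longrightarrow> q \<le> Suc n \<Longrightarrow> peak p q w = peak p q w'"
  shows "chinese_cong n w w'"
  using assms
proof (induction n arbitrary: w w')
  case 0
  then show ?case
    by (simp add: chinese_cong.refl)
next
  case (Suc n)
  let ?N = "Suc n"
  obtain u c k where u: "set u \<subseteq> {1..n}"
    and w: "chinese_cong ?N w (u @ top_row ?N c n @ replicate k ?N)"
    using top_normal_form_exists[OF Suc.prems(1)] by blast
  obtain u' c' k' where u': "set u' \<subseteq> {1..n}"
    and w': "chinese_cong ?N w' (u' @ top_row ?N c' n @ replicate k' ?N)"
    using top_normal_form_exists[OF Suc.prems(2)] by blast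
  define B where "B = top_row ?N c n @ replicate k ?N"
  define B' where "B' = top_row ?N c' n @ replicate k' ?N"
  have peaks: "peak p q (u @ B) = peak p q (u' @ B')" if "p < q" "q \<le> Suc ?N" for p q
    using Suc.prems(3)[OF that] peak_chinese_cong[OF w] peak_chinese_cong[OF w']
    by (simp add: B_def B'_def)
  have peaks_u: "peak p q u = peak p q u'" if "p < q" "q \<le> ?N" for p q
    using peaks[of p q] that peak_append_top_row_replicate[OF that]
    by (simp add: B_def B'_def)
  have counts_u: "count_le p u = count_le p u'" for p
    by (rule count_le_eq_if_peaks_eq[where q = ?N]) (use u u' peaks_u in auto)
  have "\<forall>x\<in>set B. x < Suc ?N" and "\<forall>x\<in>set B'. x < Suc ?N"
    using set_top_row[of ?N c n] set_top_row[of ?N c' n] by (auto simp: B_def B'_def)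
  then have counts: "count_le p (u @ B) = count_le p (u' @ B')" for p
    by (intro count_le_eq_if_peaks_eq[where q = "Suc ?N"]) (use u u' peaks in auto)
  have "B = B'"
    unfolding B_def B'_def
    by (rule top_row_replicate_eq_if_count_le_eq) (use counts counts_u in \<open>auto simp: B_def B'_def\<close>)
  have "chinese_cong ?N w (u @ B)"
    using w by (simp add: B_def)
  also have "chinese_cong ?N (u @ B) (u' @ B)"
    using chinese_cong_append_right[OF chinese_cong_mono[OF Suc.IH[OF u u' peaks_u]]] by simp
  also have "u' @ B = u' @ B'"
    using \<open>B = B'\<close> by simp
  also have "chinese_cong ?N (u' @ B') w'"
    using chinese_cong.sym[OF w'] by (simp add: B'_def)
  finally show ?case .
qed

theorem corollaryI:
  fixes n :: nat and u v :: "'a list"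
  assumes "n \<ge> 1" and "u \<noteq> []" and "v \<noteq> []"
    and "U2T_satisfies u v"
  shows "chinese_satisfies n u v"
  unfolding chinese_satisfies_def
proof (intro allI impI)
  fix \<sigma> :: "'a \<Rightarrow> nat list"
  assume "\<forall>x. set (\<sigma> x) \<subseteq> {1..n}"
  then have "set (concat (map \<sigma> u)) \<subseteq> {1..n}" and "set (concat (map \<sigma> v)) \<subseteq> {1..n}"
    by auto
  then show "chinese_cong n (concat (map \<sigma> u)) (concat (map \<sigma> v))"
    using peak_eq_if_U2T_satisfies[OF assms(4,2,3)] by (rule chinese_cong_if_peaks_eq)
qed

end
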